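(* Let $0<c<1$ and let $(v^*,u^* )$ be the unique saddle point of $\min_v\max_u E(v,u)$. Define, for $v\in\mathbb{R}^{|S|}$, $u\in\mathbb{R}^{|S|\times|A|}_{>0}$, $$L_c(v,u)=\frac{\alpha}{2}\sum_s|v_s-v^*_s|^2+\tau\Big(\sum_{s,a}\Big(u^*_{sa}\log\frac{u^*_{sa}}{u_{sa}}+u_{sa}-u^*_{sa}\Big)+\frac{c}{1-c}\sum_s\Big(\tilde u^*_s\log\frac{\tilde u^*_s}{\tilde u_s}+\tilde u_s-\tilde u^*_s\Big)\Big).$$ Then $L_c$ is convex, its unique minimum is attained at $(v^*,u^* )$ with $L_c(v^*,u^* )=0$, and the sublevel sets of $L_c$ are bounded.
   Context: Finite MDP: state space $S$, action space $A$, transition probabilities $P_{ass'}$ (with $\sum_{s'}P_{ass'}=1$), rewards $r_{sa}\ge0$, discount $\gamma\in(0,1)$, regularization $\tau>0$, and $\alpha>0$. $K_{ass'}=\delta_{ss'}-\gamma P_{ass'}$, $\tilde u_s=\sum_a u_{sa}$ (and $\tilde u^*_s=\sum_a u^*_{sa}$), and $E(v,u)=\frac{\alpha}{2}\sum_s v_s^2+\sum_{s,a}u_{sa}(r_{sa}-\sum_{s'}K_{ass'}v_{s'})-\tau\sum_{s,a}u_{sa}\log(u_{sa}/\tilde u_s)$. This min-max problem has a unique saddle point $(v^*,u^* )$ with $u^*_{sa}>0$. *)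

theory Defs
  imports "HOL-Analysis.Analysis"
begin

text \<open>Value functions v :: real^'s, occupancy variables u :: real^'a^'s (u $ s $ a = u_{sa}).
  Transition probabilities P a s s' = P_{ass'}, rewards r s a = r_{sa}.\<close>

definition Kmat :: "real \<Rightarrow> ('a \<Rightarrow> 's \<Rightarrow> 's \<Rightarrow> real) \<Rightarrow> 'a \<Rightarrow> 's \<Rightarrow> 's \<Rightarrow> real" where
  "Kmat \<gamma> P a s s' = (if s = s' then 1 else 0) - \<gamma> * P a s s'"

definition utilde :: "real^'a^'s \<Rightarrow> 's \<Rightarrow> real" where
  "utilde u s = (\<Sum>a\<in>UNIV. u $ s $ a)"

definition Efun :: "real \<Rightarrow> real \<Rightarrow> real \<Rightarrow> ('a::finite \<Rightarrow> 's::finite \<Rightarrow> 's \<Rightarrow> real)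
    \<Rightarrow> ('s \<Rightarrow> 'a \<Rightarrow> real) \<Rightarrow> real^'s \<Rightarrow> real^'a^'s \<Rightarrow> real" where
  "Efun \<alpha> \<gamma> \<tau> P r v u =
     \<alpha> / 2 * (\<Sum>s\<in>UNIV. (v $ s)^2)
     + (\<Sum>s\<in>UNIV. \<Sum>a\<in>UNIV. u $ s $ a * (r s a - (\<Sum>s'\<in>UNIV. Kmat \<gamma> P a s s' * v $ s')))
     - \<tau> * (\<Sum>s\<in>UNIV. \<Sum>a\<in>UNIV. u $ s $ a * ln (u $ s $ a / utilde u s))"

definition is_saddle :: "real \<Rightarrow> real \<Rightarrow> real \<Rightarrow> ('a::finite \<Rightarrow> 's::finite \<Rightarrow> 's \<Rightarrow> real)
    \<Rightarrow> ('s \<Rightarrow> 'a \<Rightarrow> real) \<Rightarrow> real^'s \<Rightarrow> real^'a^'s \<Rightarrow> bool" where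
  "is_saddle \<alpha> \<gamma> \<tau> P r vs us \<longleftrightarrow>
     (\<forall>s a. us $ s $ a \<ge> 0) \<and>
     (\<forall>u. (\<forall>s a. u $ s $ a \<ge> 0) \<longrightarrow> Efun \<alpha> \<gamma> \<tau> P r vs u \<le> Efun \<alpha> \<gamma> \<tau> P r vs us) \<and>
     (\<forall>v. Efun \<alpha> \<gamma> \<tau> P r vs us \<le> Efun \<alpha> \<gamma> \<tau> P r v us)"

definition Lc :: "real \<Rightarrow> real \<Rightarrow> real \<Rightarrow> (real^'s::finite) \<Rightarrow> (real^'a::finite^'s)
    \<Rightarrow> (real^'s) \<times> (real^'a^'s) \<Rightarrow> real" where
  "Lc c \<alpha> \<tau> vs us = (\<lambda>(v, u).
     \<alpha> / 2 * (\<Sum>s\<in>UNIV. \<bar>v $ s - vs $ s\<bar>^2)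
     + \<tau> * ((\<Sum>s\<in>UNIV. \<Sum>a\<in>UNIV.
                 us $ s $ a * ln (us $ s $ a / u $ s $ a) + u $ s $ a - us $ s $ a)
            + c / (1 - c) * (\<Sum>s\<in>UNIV.
                 utilde us s * ln (utilde us s / utilde u s) + utilde u s - utilde us s)))"

definition posdom :: "((real^'s::finite) \<times> (real^'a::finite^'s)) set" where
  "posdom = {(v, u). \<forall>s a. u $ s $ a > 0}"

end

theory Submission
  imports Defs
begin

text \<open>
  \<open>L\<^sub>c\<close> is \<open>\<alpha>/2 |v - v*|\<^sup>2\<close> plus \<open>\<tau>\<close> times generalised Kullback-Leibler divergences
  \<open>D(a, y) = a ln (a/y) + y - a\<close>, taken coordinatewise in \<open>u\<close> and in the row sums \<open>\<tilde>u\<close>.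
  For fixed \<open>a > 0\<close>, \<open>D(a, \<cdot>)\<close> is convex because \<open>ln\<close> is concave, and \<open>ln x \<le> x - 1\<close>
  (with equality only at \<open>x = 1\<close>) makes it nonnegative with its only zero at \<open>y = a\<close>.
  Composing with the linear maps \<open>u \<mapsto> u\<^sub>s\<^sub>a\<close> and \<open>u \<mapsto> \<tilde>u\<^sub>s\<close> gives convexity of \<open>L\<^sub>c\<close> and its
  strict minimum \<open>0\<close> at \<open>(v*, u*)\<close>. Each summand is a lower bound for \<open>L\<^sub>c\<close>, and
  \<open>D(a, y) \<ge> y/2 - a ln 2\<close>, so every coordinate is bounded on a sublevel set.
\<close>

definition kl_div :: "real \<Rightarrow> real \<Rightarrow> real" where
  "kl_div a y = a * ln (a / y) + y - a"

lemma kl_div_self [simp]: "kl_div a a = 0"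
  by (simp add: kl_div_def)

lemma kl_div_eq_ln:
  assumes "0 < a" "0 < y"
  shows "kl_div a y = y - a - a * ln (y / a)"
  using assms by (simp add: kl_div_def ln_div algebra_simps)

lemma kl_div_nonneg:
  assumes "0 < a" "0 < y"
  shows "0 \<le> kl_div a y"
proof -
  have "a * ln (y / a) \<le> a * (y / a - 1)"
    using assms by (intro mult_left_mono ln_le_minus_one) auto
  also have "\<dots> = y - a"
    using assms by (simp add: field_simps)
  finally show ?thesis
    using assms by (simp add: kl_div_eq_ln)
qed

lemma kl_div_pos:
  assumes "0 < a" "0 < y" "y \<noteq> a"
  shows "0 < kl_div a y"
proof -
  have "ln (y / a) \<noteq> y / a - 1"
    using assms ln_eq_minus_one[of "y / a"] by auto
  then have "ln (y / a) < y / a - 1"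
    using assms ln_le_minus_one[of "y / a"] by simp
  then have "a * ln (y / a) < a * (y / a - 1)"
    using assms by simp
  also have "\<dots> = y - a"
    using assms by (simp add: field_simps)
  finally show ?thesis
    using assms by (simp add: kl_div_eq_ln)
qed

lemma kl_div_ge_affine:
  assumes "0 < a" "0 < y"
  shows "y / 2 - a * ln 2 \<le> kl_div a y"
proof -
  have "a * ln (y / (2 * a)) \<le> a * (y / (2 * a) - 1)"
    using assms by (intro mult_left_mono ln_le_minus_one) auto
  also have "\<dots> = y / 2 - a"
    using assms by (simp add: field_simps)
  finally have "a * (ln (y / a) - ln 2) \<le> y / 2 - a"
    using assms by (simp add: ln_div ln_mult algebra_simps)
  then show ?thesis
    using assms by (simp add: kl_div_eq_ln algebra_simps)
qed

lemma convex_on_kl_div: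
  assumes "0 \<le> a"
  shows "convex_on {0<..} (kl_div a)"
proof (rule convex_onI)
  fix t x y :: real
  assume t: "0 < t" "t < 1" and xy: "x \<in> {0<..}" "y \<in> {0<..}"
  have mix_pos: "0 < (1 - t) * x + t * y"
    using t xy by (simp add: add_pos_pos)
  have kl_ln: "kl_div a z = a * ln a - a * ln z + z - a" if "0 < z" for z
    using assms that by (cases "a = 0") (simp_all add: kl_div_def ln_div algebra_simps)
  have "(1 - t) * ln x + t * ln y \<le> ln ((1 - t) * x + t * y)"
    using concave_onD[OF ln_concave, of t x y] t xy by simp
  then have "a * ((1 - t) * ln x + t * ln y) \<le> a * ln ((1 - t) * x + t * y)"
    using assms by (rule mult_left_mono)
  then show "kl_div a ((1 - t) *\<^sub>R x + t *\<^sub>R y) \<le> (1 - t) * kl_div a x + t * kl_div a y"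
    using xy mix_pos by (simp add: kl_ln algebra_simps)
qed simp

lemma convex_on_power2_diff: "convex_on UNIV (\<lambda>x::real. (x - a)\<^sup>2)"
proof (rule convex_onI)
  fix t x y :: real
  assume "0 < t" "t < 1"
  moreover have "(1 - t) * (x - a)\<^sup>2 + t * (y - a)\<^sup>2 - ((1 - t) *\<^sub>R x + t *\<^sub>R y - a)\<^sup>2
      = t * (1 - t) * (x - y)\<^sup>2"
    by (simp add: power2_eq_square algebra_simps)
  ultimately show "((1 - t) *\<^sub>R x + t *\<^sub>R y - a)\<^sup>2 \<le> (1 - t) * (x - a)\<^sup>2 + t * (y - a)\<^sup>2"
    by (smt (verit) mult_nonneg_nonneg zero_le_power2)
qed simp

lemma convex_on_sum_fun:
  assumes "finite I" "convex S" "\<And>i. i \<in> I \<Longrightarrow> convex_on S (f i)"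
  shows "convex_on S (\<lambda>x. \<Sum>i\<in>I. f i x)"
  using assms by (induction I rule: finite_induct) (auto simp: convex_on_const)

lemma convex_on_compose_linear:
  assumes "convex_on C f" "linear g" "convex S" "g ` S \<subseteq> C"
  shows "convex_on S (\<lambda>x. f (g x))"
  using assms unfolding convex_on_def by (auto simp: linear_add linear_scale image_subset_iff)

lemma bounded_cart_if_bounded_components:
  fixes S :: "('a::real_normed_vector ^ 'n) set"
  assumes "\<And>i. bounded ((\<lambda>x. x $ i) ` S)"
  shows "bounded S"
proof -
  have "\<forall>i. \<exists>B. \<forall>x\<in>S. norm (x $ i) \<le> B"
    using assms by (auto simp: bounded_iff)
  then obtain B where B: "\<And>i x. x \<in> S \<Longrightarrow> norm (x $ i) \<le> B i"
    by metis
  have "norm x \<le> (\<Sum>i\<in>UNIV. B i)" if "x \<in> S" for x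
  proof -
    have "norm x \<le> (\<Sum>i\<in>UNIV. norm (x $ i))"
      unfolding norm_vec_def by (rule L2_set_le_sum) simp
    also have "\<dots> \<le> (\<Sum>i\<in>UNIV. B i)"
      using B that by (intro sum_mono) auto
    finally show ?thesis .
  qed
  then show ?thesis
    unfolding bounded_iff by blast
qed

lemma utilde_pos: "\<forall>s a. 0 < u $ s $ a \<Longrightarrow> 0 < utilde u s"
  unfolding utilde_def by (intro sum_pos) auto

lemma linear_utilde: "linear (\<lambda>u. utilde u s)"
  by (simp add: linear_iff utilde_def sum.distrib sum_distrib_left)

lemma convex_posdom: "convex posdom"
proof -
  have "0 < (1 - t) * x + t * y" if "0 \<le> t" "t \<le> 1" "0 < x" "0 < y" for t x y :: real
    using that by (cases "t = 0") (simp_all add: add_nonneg_pos)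
  then show ?thesis
    unfolding convex_alt posdom_def by auto
qed

lemma Lc_eq_kl_div:
  "Lc c \<alpha> \<tau> vs us p = \<alpha> / 2 * (\<Sum>s\<in>UNIV. (fst p $ s - vs $ s)\<^sup>2)
     + \<tau> * ((\<Sum>s\<in>UNIV. \<Sum>a\<in>UNIV. kl_div (us $ s $ a) (snd p $ s $ a))
            + c / (1 - c) * (\<Sum>s\<in>UNIV. kl_div (utilde us s) (utilde (snd p) s)))"
  by (cases p) (simp add: Lc_def kl_div_def)

lemma convex_on_Lc:
  assumes "0 \<le> \<alpha>" "0 \<le> \<tau>" "0 \<le> c" "c < 1" "\<forall>s a. 0 \<le> us $ s $ a"
  shows "convex_on posdom (Lc c \<alpha> \<tau> vs us)"
proof -
  have sq: "convex_on posdom (\<lambda>p. (fst p $ s - vs $ s)\<^sup>2)" for s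
    by (rule convex_on_compose_linear[OF convex_on_power2_diff])
      (auto simp: convex_posdom linear_iff)
  have kl: "convex_on posdom (\<lambda>p. kl_div (us $ s $ a) (snd p $ s $ a))" for s a
    by (rule convex_on_compose_linear[OF convex_on_kl_div])
      (use convex_posdom in \<open>auto simp: assms linear_iff posdom_def\<close>)
  have kl_utilde: "convex_on posdom (\<lambda>p. kl_div (utilde us s) (utilde (snd p) s))" for s
  proof (rule convex_on_compose_linear[OF convex_on_kl_div])
    show "0 \<le> utilde us s"
      using assms by (simp add: utilde_def sum_nonneg)
    show "linear (\<lambda>p. utilde (snd p) s)"
      using linear_compose[OF linear_snd linear_utilde] by (simp add: o_def)
    show "(\<lambda>p. utilde (snd p) s) ` posdom \<subseteq> {0<..}"
      by (auto simp: posdom_def intro: utilde_pos)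
  qed (rule convex_posdom)
  show ?thesis
    unfolding Lc_eq_kl_div[abs_def] using assms
    by (intro convex_on_add convex_on_cmul convex_on_sum_fun sq kl kl_utilde convex_posdom)
      auto
qed

lemma Lc_ge_components:
  assumes "0 \<le> \<alpha>" "0 \<le> \<tau>" "0 \<le> c" "c < 1" "\<forall>s a. 0 < us $ s $ a" "(v, u) \<in> posdom"
  shows "\<alpha> / 2 * (v $ s - vs $ s)\<^sup>2 \<le> Lc c \<alpha> \<tau> vs us (v, u)"
    and "\<tau> * kl_div (us $ s $ a) (u $ s $ a) \<le> Lc c \<alpha> \<tau> vs us (v, u)"
proof -
  define sq where "sq = (\<Sum>s\<in>UNIV. (v $ s - vs $ s)\<^sup>2)"
  define kl where "kl = (\<Sum>s\<in>UNIV. \<Sum>a\<in>UNIV. kl_div (us $ s $ a) (u $ s $ a))"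
  define kl_utilde where "kl_utilde = (\<Sum>s\<in>UNIV. kl_div (utilde us s) (utilde u s))"
  have u_pos: "\<forall>s a. 0 < u $ s $ a"
    using assms(6) by (simp add: posdom_def)
  have kl_div_u_nonneg: "0 \<le> kl_div (us $ s' $ a') (u $ s' $ a')" for s' a'
    using assms(5) u_pos by (simp add: kl_div_nonneg)
  have "(v $ s - vs $ s)\<^sup>2 \<le> sq"
    unfolding sq_def by (rule member_le_sum) auto
  moreover have "kl_div (us $ s $ a) (u $ s $ a) \<le> kl"
  proof -
    have "kl_div (us $ s $ a) (u $ s $ a) \<le> (\<Sum>a\<in>UNIV. kl_div (us $ s $ a) (u $ s $ a))"
      using kl_div_u_nonneg by (intro member_le_sum) auto
    also have "\<dots> \<le> kl"
      unfolding kl_def using kl_div_u_nonneg by (intro member_le_sum sum_nonneg) auto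
    finally show ?thesis .
  qed
  moreover have "0 \<le> sq" "0 \<le> kl" "0 \<le> kl_utilde"
    using assms(5) u_pos kl_div_u_nonneg
    by (auto simp: sq_def kl_def kl_utilde_def intro!: sum_nonneg kl_div_nonneg utilde_pos)
  moreover have "Lc c \<alpha> \<tau> vs us (v, u) = \<alpha> / 2 * sq + \<tau> * (kl + c / (1 - c) * kl_utilde)"
    by (simp add: Lc_eq_kl_div sq_def kl_def kl_utilde_def)
  ultimately show "\<alpha> / 2 * (v $ s - vs $ s)\<^sup>2 \<le> Lc c \<alpha> \<tau> vs us (v, u)"
    and "\<tau> * kl_div (us $ s $ a) (u $ s $ a) \<le> Lc c \<alpha> \<tau> vs us (v, u)"
    using assms(1-4)
    by (smt (verit, best) mult_left_mono mult_nonneg_nonneg divide_nonneg_nonneg)+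
qed

lemma Lc_pos:
  assumes "0 < \<alpha>" "0 < \<tau>" "0 \<le> c" "c < 1" "\<forall>s a. 0 < us $ s $ a"
    and "p \<in> posdom" "p \<noteq> (vs, us)"
  shows "0 < Lc c \<alpha> \<tau> vs us p"
proof -
  obtain v u where p: "p = (v, u)"
    by (cases p)
  note Lc_ge = Lc_ge_components[where vs = vs, OF less_imp_le[OF assms(1)] less_imp_le[OF assms(2)]
      assms(3-5) assms(6)[unfolded p]]
  have "0 < Lc c \<alpha> \<tau> vs us (v, u)"
  proof (cases "v = vs")
    case False
    then obtain s where "v $ s \<noteq> vs $ s"
      by (auto simp: vec_eq_iff)
    then have "0 < \<alpha> / 2 * (v $ s - vs $ s)\<^sup>2"
      using assms(1) by simp
    then show ?thesis
      using Lc_ge(1)[of s] by linarith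
  next
    case True
    then obtain s a where "u $ s $ a \<noteq> us $ s $ a"
      using assms(7) p by (auto simp: vec_eq_iff)
    then have "0 < \<tau> * kl_div (us $ s $ a) (u $ s $ a)"
      using assms(2,5,6) p by (simp add: kl_div_pos posdom_def)
    then show ?thesis
      using Lc_ge(2)[of s a] by linarith
  qed
  then show ?thesis
    using p by simp
qed

lemma bounded_Lc_sublevel:
  assumes "0 < \<alpha>" "0 < \<tau>" "0 \<le> c" "c < 1" "\<forall>s a. 0 < us $ s $ a"
  shows "bounded {p \<in> posdom. Lc c \<alpha> \<tau> vs us p \<le> t}" (is "bounded ?S")
proof -
  note Lc_ge = Lc_ge_components[where vs = vs, OF less_imp_le[OF assms(1)] less_imp_le[OF assms(2)]
      assms(3-5)]
  define r where "r = sqrt (2 * t / \<alpha>)"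
  define R where "R s a = 2 * (t / \<tau> + us $ s $ a * ln 2)" for s a
  have v_bound: "fst p $ s \<in> {vs $ s - r .. vs $ s + r}" if "p \<in> ?S" for p s
  proof -
    have "\<bar>fst p $ s - vs $ s\<bar> \<le> r"
      unfolding r_def
    proof (rule real_le_rsqrt)
      have "\<alpha> / 2 * (fst p $ s - vs $ s)\<^sup>2 \<le> t"
        using that Lc_ge(1)[of "fst p" "snd p" s] by auto
      then show "\<bar>fst p $ s - vs $ s\<bar>\<^sup>2 \<le> 2 * t / \<alpha>"
        using assms(1) by (simp add: field_simps)
    qed
    then show ?thesis
      by (simp add: abs_le_iff)
  qed
  have u_bound: "snd p $ s $ a \<in> {0 .. R s a}" if "p \<in> ?S" for p s a
  proof -
    have u_pos: "0 < snd p $ s $ a"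
      using that by (auto simp: posdom_def)
    have "snd p $ s $ a / 2 - us $ s $ a * ln 2 \<le> kl_div (us $ s $ a) (snd p $ s $ a)"
      using u_pos assms(5) by (intro kl_div_ge_affine) auto
    moreover have "\<tau> * kl_div (us $ s $ a) (snd p $ s $ a) \<le> t"
      using that Lc_ge(2)[of "fst p" "snd p" s a] by auto
    then have "kl_div (us $ s $ a) (snd p $ s $ a) \<le> t / \<tau>"
      using assms(2) by (simp add: pos_le_divide_eq mult.commute)
    ultimately show ?thesis
      unfolding R_def using u_pos by simp
  qed
  have "bounded (fst ` ?S)"
  proof (rule bounded_cart_if_bounded_components)
    fix s
    have "(\<lambda>v. v $ s) ` fst ` ?S \<subseteq> {vs $ s - r .. vs $ s + r}"
      using v_bound by blast
    then show "bounded ((\<lambda>v. v $ s) ` fst ` ?S)"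
      by (rule bounded_subset[OF bounded_closed_interval])
  qed
  moreover have "bounded (snd ` ?S)"
  proof (rule bounded_cart_if_bounded_components)
    fix s
    show "bounded ((\<lambda>u. u $ s) ` snd ` ?S)"
    proof (rule bounded_cart_if_bounded_components)
      fix a
      have "(\<lambda>w. w $ a) ` (\<lambda>u. u $ s) ` snd ` ?S \<subseteq> {0 .. R s a}"
        using u_bound by blast
      then show "bounded ((\<lambda>w. w $ a) ` (\<lambda>u. u $ s) ` snd ` ?S)"
        by (rule bounded_subset[OF bounded_closed_interval])
    qed
  qed
  ultimately show ?thesis
    using bounded_subset[OF bounded_Times subset_fst_snd] by blast
qed

theorem lemma3p1:
  fixes P :: "'a::finite \<Rightarrow> 's::finite \<Rightarrow> 's \<Rightarrow> real"
    and r :: "'s \<Rightarrow> 'a \<Rightarrow> real"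
    and \<gamma> \<tau> \<alpha> c :: real
    and vs :: "real^'s" and us :: "real^'a^'s"
  assumes P_nonneg: "\<forall>a s s'. P a s s' \<ge> 0"
    and P_sum: "\<forall>a s. (\<Sum>s'\<in>UNIV. P a s s') = 1"
    and r_nonneg: "\<forall>s a. r s a \<ge> 0"
    and gamma: "0 < \<gamma>" "\<gamma> < 1"
    and tau: "\<tau> > 0"
    and alpha: "\<alpha> > 0"
    and c: "0 < c" "c < 1"
    and saddle: "is_saddle \<alpha> \<gamma> \<tau> P r vs us"
    and unique: "\<forall>v u. is_saddle \<alpha> \<gamma> \<tau> P r v u \<longrightarrow> v = vs \<and> u = us"
    and us_pos: "\<forall>s a. us $ s $ a > 0"
  shows "convex_on posdom (Lc c \<alpha> \<tau> vs us)
       \<and> (vs, us) \<in> posdom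
       \<and> Lc c \<alpha> \<tau> vs us (vs, us) = 0
       \<and> (\<forall>p\<in>posdom. p \<noteq> (vs, us) \<longrightarrow> Lc c \<alpha> \<tau> vs us (vs, us) < Lc c \<alpha> \<tau> vs us p)
       \<and> (\<forall>t. bounded {p\<in>posdom. Lc c \<alpha> \<tau> vs us p \<le> t})"
proof -
  have us_nonneg: "\<forall>s a. 0 \<le> us $ s $ a"
    using us_pos by (simp add: less_imp_le)
  have "(vs, us) \<in> posdom"
    using us_pos by (simp add: posdom_def)
  moreover have "Lc c \<alpha> \<tau> vs us (vs, us) = 0"
    by (simp add: Lc_eq_kl_div)
  moreover have "0 < Lc c \<alpha> \<tau> vs us p" if "p \<in> posdom" "p \<noteq> (vs, us)" for p
    using Lc_pos[OF alpha tau less_imp_le[OF c(1)] c(2) us_pos that] .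
  ultimately show ?thesis
    using convex_on_Lc[OF less_imp_le[OF alpha] less_imp_le[OF tau] less_imp_le[OF c(1)] c(2) us_nonneg]
      bounded_Lc_sublevel[OF alpha tau less_imp_le[OF c(1)] c(2) us_pos]
    by auto
qed

end
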